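(* Assume conditions (C1)–(C5). If $\zeta,\tilde\zeta\in\Theta$ satisfy $\limsup_{k\to\infty}\|\zeta_k-\tilde\zeta_k\|>0$, then there exist numbers $\epsilon_0>0$, $\epsilon_1>0$ and infinitely many pairwise disjoint intervals $J_q\subset\mathbb T_0$, $q\in\mathbb N$, each of length at least $\epsilon_1$, such that $\|\varphi_\zeta(t)-\varphi_{\tilde\zeta}(t)\|>\epsilon_0$ for all $t\in\bigcup_qJ_q$ (i.e. the pair $\varphi_\zeta,\varphi_{\tilde\zeta}$ is frequently $(\epsilon_0,\epsilon_1)$-separated).
   Context: Fix integers $m,n\ge1$ and $r\ge0$. Cells are indexed by pairs $(i,j)$, $1\le i\le m$, $1\le j\le n$. The $r$-neighbourhood of $(i,j)$ is $N_r(i,j)=\{(h,l):1\le h\le m,\ 1\le l\le n,\ \max(|h-i|,|l-j|)\le r\}$. Fix constants $a_{ij}>0$, $C^{hl}_{ij}\ge0$, and a continuous function $f:\mathbb R\to\mathbb R$. Vectors of $\mathbb R^{mn}$ are written $v=\{v_{ij}\}$, with norm $\|v\|=\max_{(i,j)}|v_{ij}|$. Time scale: $\{\theta_k\}_{k\in\mathbb Z}$ is strictly increasing, $\theta_{-1}<0<\theta_0$, and there exist $\omega>0$ and $p\in\mathbb N$ with $\theta_{k+2p}=\theta_k+\omega$ for all $k$. Set $\mathbb T_0=\bigcup_{k\in\mathbb Z}[\theta_{2k-1},\theta_{2k}]$, $\delta_k=\theta_{2k+1}-\theta_{2k}$, $\eta_k=\theta_{2k}-\theta_{2k-1}$ (both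 $p$-periodic in $k$), $\delta=\max_{1\le k\le p}\delta_k$. On $\mathbb T_0'=\mathbb T_0\setminus\{\theta_{2k-1}:k\in\mathbb Z\}$ define $\psi(t)=t-\sum_{0<\theta_{2k}<t}\delta_k$ for $t\ge0$ and $\psi(t)=t+\sum_{t\le\theta_{2k}<0}\delta_k$ for $t<0$; put $s_k=\psi(\theta_{2k})$, so $s_k-s_{k-1}=\eta_k$, and write $\psi(\omega):=\omega-\sum_{k=1}^p\delta_k=\sum_{k=1}^p\eta_k$. Inputs: $\Lambda\subset\mathbb R^{mn}$ is compact and $F:\Lambda\to\Lambda$ is continuous. $\Theta$ is the set of all sequences $\zeta=\{\zeta_k\}_{k\in\mathbb Z}$, $\zeta_k=\{\zeta^{ij}_k\}\in\Lambda$, with $\zeta_{k+1}=F(\zeta_k)$ for all $k\in\mathbb Z$. For $\zeta\in\Theta$, $L_{ij}(t,\zeta)=\zeta^{ij}_k$ for $t\in[\theta_{2k-1},\theta_{2k}]$. Network $(N_\zeta)$ on $\mathbb T_0$: $x^\Delta_{ij}(t)=-a_{ij}x_{ij}(t)-\sum_{(h,l)\in N_r(i,j)}C^{hl}_{ij}f(x_{hl}(t))x_{ij}(t)+L_{ij}(t,\zeta)$, $t\in\mathbb T_0$, where the $\Delta$-derivative at $\theta_{2k}$ is $(x(\theta_{2k+1})-x(\theta_{2k}))/\delta_k$ and elsewhere the ordinary derivative. Concretely, a solution on $\mathbb T_0$ is a function continuous and (one-sidedly at endpoints) differentiable on each $[\theta_{2k-1},\theta_{2k}]$ satisfying there $x_{ij}'=-a_{ij}x_{ij}-\sum_{(h,l)\in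 N_r(i,j)}C^{hl}_{ij}f(x_{hl})x_{ij}+\zeta^{ij}_k$, together with $x_{ij}(\theta_{2k+1})=(1-\delta_ka_{ij})x_{ij}(\theta_{2k})-\delta_k\sum_{(h,l)\in N_r(i,j)}C^{hl}_{ij}f(x_{hl}(\theta_{2k}))x_{ij}(\theta_{2k})+\delta_k\zeta^{ij}_k$. Impulsive system $(I_\zeta)$: for $s\in(s_{k-1},s_k)$, $y_{ij}'(s)=-a_{ij}y_{ij}(s)-\sum_{(h,l)\in N_r(i,j)}C^{hl}_{ij}f(y_{hl}(s))y_{ij}(s)+\zeta^{ij}_k$, and at $s=s_k$, $y_{ij}(s_k+)-y_{ij}(s_k)=-\delta_ka_{ij}y_{ij}(s_k)-\delta_k\sum_{(h,l)\in N_r(i,j)}C^{hl}_{ij}f(y_{hl}(s_k))y_{ij}(s_k)+\delta_k\zeta^{ij}_k$. Solutions are left-continuous, continuous except for discontinuities of the first kind at the $s_k$. Let $u_{ij}(s,\tau)=e^{-a_{ij}(s-\tau)}\prod_{\nu=l}^{k}(1-\delta_\nu a_{ij})$ if $s_{l-1}<\tau\le s_l$, $s_k<s\le s_{k+1}$, $k\ge l$, and $u_{ij}(s,\tau)=e^{-a_{ij}(s-\tau)}$ if $s_k<\tau\le s\le s_{k+1}$. Let $\lambda_{ij}=a_{ij}-\frac1{\psi(\omega)}\sum_{\nu=0}^{p-1}\ln|1-\delta_\nu a_{ij}|$, $\lambda=\min_{(i,j)}\lambda_{ij}$. Conditions: (C1) $\delta_ka_{ij}\ne1$ for all $i,j,k$;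 (C2) $\lambda>0$; (C3) $\sup_{s\in\mathbb R}|f(s)|\le M_f$ for some $M_f>0$; (C4) $|f(s_1)-f(s_2)|\le L_f|s_1-s_2|$ for all $s_1,s_2$, for some $L_f>0$. Under (C1),(C2) fix positive numbers $K_{ij}$ with $|u_{ij}(s,\tau)|\le K_{ij}e^{-\lambda_{ij}(s-\tau)}$ for $s\ge\tau$. Define $\bar c=\max_{(i,j)}\big(\frac{K_{ij}}{\lambda_{ij}}+\frac{p\delta K_{ij}}{1-e^{-\lambda_{ij}\psi(\omega)}}\big)\sum_{(h,l)\in N_r(i,j)}C^{hl}_{ij}$, $M_F=\max_{\eta\in\Lambda}\|F(\eta)\|$, $H_0=\frac{M_F}{1-M_f\bar c}\max_{(i,j)}\big(\frac{K_{ij}}{\lambda_{ij}}+\frac{p\delta K_{ij}}{1-e^{-\lambda_{ij}\psi(\omega)}}\big)$. (C5) $(M_f+H_0L_f)\bar c<1$. Under (C1)–(C5), for $\zeta\in\Theta$ the system $(I_\zeta)$ has a unique solution $\phi_\zeta$ on $\mathbb R$ with $\sup_s\|\phi_\zeta(s)\|\le H_0$; define $\varphi_\zeta:\mathbb T_0\to\mathbb R^{mn}$ by $\varphi_\zeta(t)=\phi_\zeta(\psi(t))$ for $t\in\mathbb T_0'$ and $\varphi_\zeta(\theta_{2k+1})=\phi_\zeta(s_k+)$. Then $\varphi_\zeta$ is the unique solution of $(N_\zeta)$ on $\mathbb T_0$ with $\sup_{t\in\mathbb T_0}\|\varphi_\zeta(t)\|\le H_0$. *)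

theory Defs
  imports "HOL-Analysis.Analysis" "HOL-Library.Liminf_Limsup"
begin

(* Vectors of R^{mn} are represented as functions v :: nat => nat => real, component v i j,
   only the cells 1<=i<=m, 1<=j<=n being relevant. *)
type_synonym vec = "nat \<Rightarrow> nat \<Rightarrow> real"

definition cells :: "nat \<Rightarrow> nat \<Rightarrow> (nat \<times> nat) set" where
  "cells m n = {1..m} \<times> {1..n}"

definition vnorm :: "nat \<Rightarrow> nat \<Rightarrow> vec \<Rightarrow> real" where
  "vnorm m n v = Max ((\<lambda>(i,j). \<bar>v i j\<bar>) ` cells m n)"

definition nbhd :: "nat \<Rightarrow> nat \<Rightarrow> nat \<Rightarrow> nat \<Rightarrow> nat \<Rightarrow> (nat \<times> nat) set" where
  "nbhd m n r i j = {(h,l) \<in> cells m n.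
      max \<bar>int h - int i\<bar> \<bar>int l - int j\<bar> \<le> int r}"

definition Theta :: "vec set \<Rightarrow> (vec \<Rightarrow> vec) \<Rightarrow> (int \<Rightarrow> vec) set" where
  "Theta \<Lambda> F = {\<zeta>. (\<forall>k. \<zeta> k \<in> \<Lambda>) \<and> (\<forall>k. \<zeta> (k + 1) = F (\<zeta> k))}"

definition T0 :: "(int \<Rightarrow> real) \<Rightarrow> real set" where
  "T0 \<theta> = (\<Union>k::int. {\<theta> (2*k - 1) .. \<theta> (2*k)})"

definition dlt :: "(int \<Rightarrow> real) \<Rightarrow> int \<Rightarrow> real" where
  "dlt \<theta> k = \<theta> (2*k + 1) - \<theta> (2*k)"

definition eta :: "(int \<Rightarrow> real) \<Rightarrow> int \<Rightarrow> real" where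
  "eta \<theta> k = \<theta> (2*k) - \<theta> (2*k - 1)"

definition dmax :: "(int \<Rightarrow> real) \<Rightarrow> nat \<Rightarrow> real" where
  "dmax \<theta> p = Max (dlt \<theta> ` {1 .. int p})"

definition psi :: "(int \<Rightarrow> real) \<Rightarrow> real \<Rightarrow> real" where
  "psi \<theta> t = (if 0 \<le> t
     then t - (\<Sum>k\<in>{k. 0 < \<theta> (2*k) \<and> \<theta> (2*k) < t}. dlt \<theta> k)
     else t + (\<Sum>k\<in>{k. t \<le> \<theta> (2*k) \<and> \<theta> (2*k) < 0}. dlt \<theta> k))"

definition sseq :: "(int \<Rightarrow> real) \<Rightarrow> int \<Rightarrow> real" where
  "sseq \<theta> k = psi \<theta> (\<theta> (2*k))"

(* psi(omega) = sum of eta_k over one period *)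
definition psi_omega :: "(int \<Rightarrow> real) \<Rightarrow> nat \<Rightarrow> real" where
  "psi_omega \<theta> p = (\<Sum>k\<in>{1 .. int p}. eta \<theta> k)"

definition sidx :: "(int \<Rightarrow> real) \<Rightarrow> real \<Rightarrow> int" where
  "sidx \<theta> t = (THE k. sseq \<theta> (k - 1) < t \<and> t \<le> sseq \<theta> k)"

(* u_{ij}(s,tau) with c = a_{ij}; meaningful for tau <= s.
   If s_{l-1} < tau <= s_l and s_k < s <= s_{k+1} then sidx tau = l, sidx s = k+1,
   and the product runs over nu = l..k (empty when tau, s lie in the same interval). *)
definition u :: "(int \<Rightarrow> real) \<Rightarrow> real \<Rightarrow> real \<Rightarrow> real \<Rightarrow> real" where
  "u \<theta> c s \<tau> = exp (- c * (s - \<tau>)) *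
      (\<Prod>\<nu>\<in>{sidx \<theta> \<tau> .. sidx \<theta> s - 1}. (1 - dlt \<theta> \<nu> * c))"

definition lam :: "(int \<Rightarrow> real) \<Rightarrow> nat \<Rightarrow> real \<Rightarrow> real" where
  "lam \<theta> p c = c - (1 / psi_omega \<theta> p) *
      (\<Sum>\<nu>\<in>{0 .. int p - 1}. ln \<bar>1 - dlt \<theta> \<nu> * c\<bar>)"

definition gain :: "(int \<Rightarrow> real) \<Rightarrow> nat \<Rightarrow> real \<Rightarrow> real \<Rightarrow> real" where
  "gain \<theta> p Kc c = Kc / lam \<theta> p c
      + real p * dmax \<theta> p * Kc / (1 - exp (- lam \<theta> p c * psi_omega \<theta> p))"

definition cbar :: "nat \<Rightarrow> nat \<Rightarrow> nat \<Rightarrow> (int \<Rightarrow> real) \<Rightarrow> nat \<Rightarrow> (nat \<Rightarrow> nat \<Rightarrow> real)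
    \<Rightarrow> (nat \<Rightarrow> nat \<Rightarrow> nat \<Rightarrow> nat \<Rightarrow> real) \<Rightarrow> (nat \<Rightarrow> nat \<Rightarrow> real) \<Rightarrow> real" where
  "cbar m n r \<theta> p a C K = Max ((\<lambda>(i,j). gain \<theta> p (K i j) (a i j) *
      (\<Sum>(h,l)\<in>nbhd m n r i j. C i j h l)) ` cells m n)"

definition MF :: "nat \<Rightarrow> nat \<Rightarrow> vec set \<Rightarrow> (vec \<Rightarrow> vec) \<Rightarrow> real" where
  "MF m n \<Lambda> F = (SUP \<eta>\<in>\<Lambda>. vnorm m n (F \<eta>))"

definition H0 :: "nat \<Rightarrow> nat \<Rightarrow> nat \<Rightarrow> (int \<Rightarrow> real) \<Rightarrow> nat \<Rightarrow> (nat \<Rightarrow> nat \<Rightarrow> real)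
    \<Rightarrow> (nat \<Rightarrow> nat \<Rightarrow> nat \<Rightarrow> nat \<Rightarrow> real) \<Rightarrow> (nat \<Rightarrow> nat \<Rightarrow> real) \<Rightarrow> real
    \<Rightarrow> vec set \<Rightarrow> (vec \<Rightarrow> vec) \<Rightarrow> real" where
  "H0 m n r \<theta> p a C K Mf \<Lambda> F =
     MF m n \<Lambda> F / (1 - Mf * cbar m n r \<theta> p a C K) *
     Max ((\<lambda>(i,j). gain \<theta> p (K i j) (a i j)) ` cells m n)"

definition coup :: "nat \<Rightarrow> nat \<Rightarrow> nat \<Rightarrow> (nat \<Rightarrow> nat \<Rightarrow> nat \<Rightarrow> nat \<Rightarrow> real)
    \<Rightarrow> (real \<Rightarrow> real) \<Rightarrow> vec \<Rightarrow> nat \<Rightarrow> nat \<Rightarrow> real" where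
  "coup m n r C f v i j = (\<Sum>(h,l)\<in>nbhd m n r i j. C i j h l * f (v h l))"

definition is_sol_N :: "nat \<Rightarrow> nat \<Rightarrow> nat \<Rightarrow> (nat \<Rightarrow> nat \<Rightarrow> real)
    \<Rightarrow> (nat \<Rightarrow> nat \<Rightarrow> nat \<Rightarrow> nat \<Rightarrow> real) \<Rightarrow> (real \<Rightarrow> real) \<Rightarrow> (int \<Rightarrow> real)
    \<Rightarrow> (int \<Rightarrow> vec) \<Rightarrow> (real \<Rightarrow> vec) \<Rightarrow> bool" where
  "is_sol_N m n r a C f \<theta> \<zeta> x \<longleftrightarrow>
     (\<forall>k::int. \<forall>(i,j)\<in>cells m n.
        (\<forall>t\<in>{\<theta> (2*k - 1) .. \<theta> (2*k)}.
           ((\<lambda>s. x s i j) has_real_derivative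
              (- a i j * x t i j - coup m n r C f (x t) i j * x t i j + \<zeta> k i j))
           (at t within {\<theta> (2*k - 1) .. \<theta> (2*k)}))
      \<and> x (\<theta> (2*k + 1)) i j =
           (1 - dlt \<theta> k * a i j) * x (\<theta> (2*k)) i j
           - dlt \<theta> k * coup m n r C f (x (\<theta> (2*k))) i j * x (\<theta> (2*k)) i j
           + dlt \<theta> k * \<zeta> k i j)"

end

theory Submission
  imports Defs
begin

text \<open>
  On a block \<open>[\<theta>(2k-1), \<theta>(2k)]\<close> the difference \<open>w = \<phi> - \<phi>'\<close> of two solutions bounded by
  \<open>H0\<close> satisfies \<open>w' = (\<zeta>\<^sub>k - \<zeta>'\<^sub>k) + O(\<parallel>w\<parallel>)\<close>, because the right-hand side of the network is
  Lipschitz on the ball of radius \<open>H0\<close>; moreover \<open>w'\<close> is uniformly bounded. If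
  \<open>\<parallel>\<zeta>\<^sub>k - \<zeta>'\<^sub>k\<parallel> > \<epsilon>\<close> and \<open>\<parallel>w\<parallel>\<close> stayed below a suitable \<open>e\<close> on the whole block, integrating one
  component over the block, whose length is bounded below by periodicity, would be contradictory.
  So \<open>\<parallel>w\<parallel> > e\<close> somewhere in the block and, by the derivative bound, \<open>\<parallel>w\<parallel> > e/2\<close> on a
  subinterval of fixed length. A positive limsup yields infinitely many such (disjoint) blocks.
\<close>

lemma finite_cells: "finite (cells m n)"
  by (simp add: cells_def)

lemma abs_le_vnorm: "(i,j) \<in> cells m n \<Longrightarrow> \<bar>v i j\<bar> \<le> vnorm m n v"
  unfolding vnorm_def by (rule Max_ge) (auto simp: finite_cells intro!: image_eqI[where x="(i,j)"])

lemma less_vnorm_iff: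
  assumes "1 \<le> m" "1 \<le> n"
  shows "c < vnorm m n v \<longleftrightarrow> (\<exists>(i,j)\<in>cells m n. c < \<bar>v i j\<bar>)"
proof -
  have "cells m n \<noteq> {}" using assms by (auto simp: cells_def)
  then show ?thesis unfolding vnorm_def by (subst Max_gr_iff) (force simp: finite_cells)+
qed

lemma bounded_on_cells: "\<exists>B::real\<ge>0. \<forall>(i,j)\<in>cells m n. \<bar>g i j\<bar> \<le> B"
proof -
  obtain B where "\<forall>x\<in>(\<lambda>(i,j). g i j) ` cells m n. norm x \<le> B"
    using finite_imp_bounded[of "(\<lambda>(i,j). g i j) ` cells m n"]
    by (auto simp: finite_cells bounded_iff)
  then show ?thesis by (intro exI[of _ "\<bar>B\<bar>"]) force
qed

lemma continuous_on_entry: "continuous_on S (\<lambda>v::vec. v i j)"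
  using continuous_on_product_then_coordinatewise
          [OF continuous_on_product_then_coordinatewise[OF continuous_on_id, of S i], of j] .

lemma compact_bounded_on_cells:
  assumes "compact (\<Lambda> :: vec set)"
  shows "\<exists>M\<ge>0. \<forall>v\<in>\<Lambda>. \<forall>(i,j)\<in>cells m n. \<bar>v i j\<bar> \<le> M"
proof -
  let ?g = "\<lambda>v::vec. \<Sum>(i,j)\<in>cells m n. \<bar>v i j\<bar>"
  have "continuous_on \<Lambda> ?g"
    unfolding case_prod_beta by (intro continuous_intros continuous_on_entry)
  then have "bounded (?g ` \<Lambda>)"
    using assms compact_continuous_image compact_imp_bounded by blast
  then obtain M where M: "\<forall>x\<in>?g ` \<Lambda>. norm x \<le> M"
    unfolding bounded_iff by blast
  have "\<bar>v i j\<bar> \<le> \<bar>M\<bar>" if "v \<in> \<Lambda>" "(i,j) \<in> cells m n" for v i j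
  proof -
    have "(\<lambda>(i,j). \<bar>v i j\<bar>) (i,j) \<le> ?g v"
      by (rule member_le_sum) (auto simp: finite_cells that(2))
    also have "\<dots> \<le> norm (?g v)" by simp
    also have "\<dots> \<le> \<bar>M\<bar>" using M that(1) by auto
    finally show ?thesis by simp
  qed
  then show ?thesis by (intro exI[of _ "\<bar>M\<bar>"]) auto
qed

section \<open>The time scale\<close>

lemma block_subset_T0: "{\<theta> (2*k - 1) .. \<theta> (2*k)} \<subseteq> T0 \<theta>"
  unfolding T0_def by blast

lemma blocks_disjoint:
  assumes "strict_mono (\<theta> :: int \<Rightarrow> real)" "k \<noteq> k'"
  shows "{\<theta> (2*k - 1) .. \<theta> (2*k)} \<inter> {\<theta> (2*k' - 1) .. \<theta> (2*k')} = {}"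
proof (cases "k < k'")
  case True
  then have "\<theta> (2*k) < \<theta> (2*k' - 1)" by (intro strict_monoD[OF assms(1)]) simp
  then show ?thesis by auto
next
  case False
  then have "\<theta> (2*k') < \<theta> (2*k - 1)" using assms(2) by (intro strict_monoD[OF assms(1)]) simp
  then show ?thesis by auto
qed

lemma periodic_int_eq_mod:
  fixes g :: "int \<Rightarrow> 'a"
  assumes "\<And>k. g (k + p) = g k"
  shows "g k = g (k mod p)"
proof -
  have "g (k mod p + p * j) = g (k mod p)" for j
  proof (induction j rule: int_induct[where k=0])
    case (step1 j)
    then show ?case using assms[of "k mod p + p * j"] by (simp add: algebra_simps)
  next
    case (step2 j)
    then show ?case using assms[of "k mod p + p * (j - 1)"] by (simp add: algebra_simps)
  qed simp
  from this[of "k div p"] show ?thesis by (simp add: mod_mult_div_eq)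
qed

lemma eta_add_period:
  assumes "\<forall>k. \<theta> (k + 2 * int p) = \<theta> k + \<omega>"
  shows "eta \<theta> (k + int p) = eta \<theta> k"
  using assms[rule_format, of "2*k"] assms[rule_format, of "2*k - 1"]
  by (simp add: eta_def algebra_simps)

lemma eta_uniform_lower_bound:
  assumes "strict_mono \<theta>" "\<forall>k. \<theta> (k + 2 * int p) = \<theta> k + \<omega>" "1 \<le> p"
  shows "\<exists>\<eta>0>0. \<forall>k. \<eta>0 \<le> eta \<theta> k"
proof (intro exI conjI allI)
  let ?E = "eta \<theta> ` {0..<int p}"
  have "0 < eta \<theta> k" for k
    using strict_monoD[OF assms(1), of "2*k - 1" "2*k"] by (simp add: eta_def)
  then show "0 < Min ?E" using assms(3) by (subst Min_gr_iff) auto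
  fix k
  have "Min ?E \<le> eta \<theta> (k mod int p)" using assms(3) by (intro Min_le) auto
  then show "Min ?E \<le> eta \<theta> k"
    using periodic_int_eq_mod[of "eta \<theta>" "int p" k] eta_add_period[OF assms(2)] by simp
qed

section \<open>The right-hand side of the network\<close>

lemma nbhd_subset_cells: "nbhd m n r i j \<subseteq> cells m n"
  by (auto simp: nbhd_def)

lemma abs_coup_le:
  assumes "\<forall>(h,l)\<in>cells m n. 0 \<le> C i j h l" and "\<forall>s. \<bar>f s\<bar> \<le> Mf"
  shows "\<bar>coup m n r C f v i j\<bar> \<le> Mf * (\<Sum>(h,l)\<in>nbhd m n r i j. C i j h l)"
proof -
  have "\<bar>coup m n r C f v i j\<bar> \<le> (\<Sum>(h,l)\<in>nbhd m n r i j. \<bar>C i j h l * f (v h l)\<bar>)"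
    unfolding coup_def case_prod_beta by (rule sum_abs)
  also have "\<dots> \<le> (\<Sum>(h,l)\<in>nbhd m n r i j. Mf * C i j h l)"
  proof (intro sum_mono, clarify)
    fix h l assume "(h,l) \<in> nbhd m n r i j"
    then have "0 \<le> C i j h l" using assms(1) nbhd_subset_cells by blast
    with assms(2) show "\<bar>C i j h l * f (v h l)\<bar> \<le> Mf * C i j h l"
      by (metis abs_mult abs_of_nonneg mult.commute mult_left_mono)
  qed
  finally show ?thesis by (simp add: sum_distrib_left case_prod_beta)
qed

lemma abs_coup_diff_le:
  assumes "\<forall>(h,l)\<in>cells m n. 0 \<le> C i j h l" and "0 \<le> Lf"
    and "\<forall>s1 s2. \<bar>f s1 - f s2\<bar> \<le> Lf * \<bar>s1 - s2\<bar>"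
  shows "\<bar>coup m n r C f v i j - coup m n r C f w i j\<bar>
           \<le> Lf * (\<Sum>(h,l)\<in>nbhd m n r i j. C i j h l) * vnorm m n (v - w)"
proof -
  have "\<bar>coup m n r C f v i j - coup m n r C f w i j\<bar>
          \<le> (\<Sum>(h,l)\<in>nbhd m n r i j. \<bar>C i j h l * (f (v h l) - f (w h l))\<bar>)"
    unfolding coup_def case_prod_beta sum_subtractf[symmetric] right_diff_distrib[symmetric]
    by (rule sum_abs)
  also have "\<dots> \<le> (\<Sum>(h,l)\<in>nbhd m n r i j. Lf * vnorm m n (v - w) * C i j h l)"
  proof (intro sum_mono, clarify)
    fix h l assume hl: "(h,l) \<in> nbhd m n r i j"
    then have cell: "(h,l) \<in> cells m n" using nbhd_subset_cells by blast
    have "\<bar>f (v h l) - f (w h l)\<bar> \<le> Lf * \<bar>(v - w) h l\<bar>" using assms(3) by simp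
    also have "\<dots> \<le> Lf * vnorm m n (v - w)"
      using abs_le_vnorm[OF cell] assms(2) by (rule mult_left_mono)
    finally show "\<bar>C i j h l * (f (v h l) - f (w h l))\<bar> \<le> Lf * vnorm m n (v - w) * C i j h l"
      using assms(1) cell by (fastforce simp: abs_mult mult.commute intro: mult_left_mono)
  qed
  finally show ?thesis by (simp add: sum_distrib_left case_prod_beta mult_ac)
qed

definition network_rhs :: "nat \<Rightarrow> nat \<Rightarrow> nat \<Rightarrow> (nat \<Rightarrow> nat \<Rightarrow> real)
    \<Rightarrow> (nat \<Rightarrow> nat \<Rightarrow> nat \<Rightarrow> nat \<Rightarrow> real) \<Rightarrow> (real \<Rightarrow> real) \<Rightarrow> vec \<Rightarrow> vec \<Rightarrow> nat \<Rightarrow> nat \<Rightarrow> real"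
  where "network_rhs m n r a C f v z i j = - a i j * v i j - coup m n r C f v i j * v i j + z i j"

lemma is_sol_N_has_real_derivative:
  assumes "is_sol_N m n r a C f \<theta> \<zeta> x" "(i,j) \<in> cells m n" "t \<in> {\<theta> (2*k - 1) .. \<theta> (2*k)}"
  shows "((\<lambda>s. x s i j) has_real_derivative network_rhs m n r a C f (x t) (\<zeta> k) i j)
           (at t within {\<theta> (2*k - 1) .. \<theta> (2*k)})"
  using assms unfolding is_sol_N_def network_rhs_def by fast

lemma abs_mult_le_mult: "\<bar>x\<bar> \<le> X \<Longrightarrow> \<bar>y\<bar> \<le> Y \<Longrightarrow> \<bar>x * y\<bar> \<le> X * (Y::real)"
  by (simp add: abs_mult mult_mono')

lemma abs_network_rhs_le:
  assumes "\<bar>a i j\<bar> \<le> A" "\<bar>coup m n r C f v i j\<bar> \<le> Mc" "\<bar>v i j\<bar> \<le> H" "\<bar>z i j\<bar> \<le> Z"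
  shows "\<bar>network_rhs m n r a C f v z i j\<bar> \<le> (A + Mc) * H + Z"
  using abs_mult_le_mult[OF assms(1,3)] abs_mult_le_mult[OF assms(2,3)] assms(4)
  unfolding network_rhs_def by (simp add: distrib_right abs_le_iff)

lemma abs_network_rhs_diff_le:
  assumes "(i,j) \<in> cells m n" "\<bar>a i j\<bar> \<le> A" "\<bar>coup m n r C f v i j\<bar> \<le> Mc"
    and "\<bar>coup m n r C f v i j - coup m n r C f w i j\<bar> \<le> Lc * vnorm m n (v - w)"
    and "\<bar>w i j\<bar> \<le> H"
  shows "\<bar>network_rhs m n r a C f v z i j - network_rhs m n r a C f w z' i j - (z i j - z' i j)\<bar>
           \<le> (A + Mc + Lc * H) * vnorm m n (v - w)"
proof -
  define c c' where "c = coup m n r C f v i j" and "c' = coup m n r C f w i j"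
  have vw: "\<bar>v i j - w i j\<bar> \<le> vnorm m n (v - w)" using abs_le_vnorm[OF assms(1), of "v - w"] by simp
  have "network_rhs m n r a C f v z i j - network_rhs m n r a C f w z' i j - (z i j - z' i j)
          = - (a i j * (v i j - w i j)) - c * (v i j - w i j) - (c - c') * w i j"
    unfolding network_rhs_def c_def c'_def by (simp add: algebra_simps)
  moreover have "\<bar>a i j * (v i j - w i j)\<bar> \<le> A * vnorm m n (v - w)"
    using assms(2) vw by (rule abs_mult_le_mult)
  moreover have "\<bar>c * (v i j - w i j)\<bar> \<le> Mc * vnorm m n (v - w)"
    using assms(3) vw unfolding c_def by (rule abs_mult_le_mult)
  moreover have "\<bar>(c - c') * w i j\<bar> \<le> Lc * vnorm m n (v - w) * H"
    using assms(4,5) unfolding c_def c'_def by (rule abs_mult_le_mult)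
  ultimately show ?thesis by (simp add: algebra_simps abs_le_iff)
qed

lemma network_rhs_pointwise_bounds:
  assumes ij: "(i,j) \<in> cells m n" and C_ij: "\<forall>(h,l)\<in>cells m n. 0 \<le> C i j h l"
    and f_bd: "0 \<le> Mf" "\<forall>s. \<bar>f s\<bar> \<le> Mf"
    and f_lip: "0 \<le> Lf" "\<forall>s1 s2. \<bar>f s1 - f s2\<bar> \<le> Lf * \<bar>s1 - s2\<bar>"
    and a_ij: "\<bar>a i j\<bar> \<le> A" and S_ij: "(\<Sum>(h,l)\<in>nbhd m n r i j. C i j h l) \<le> S"
    and vw_ij: "\<bar>v i j\<bar> \<le> H" "\<bar>w i j\<bar> \<le> H" and z_ij: "\<bar>z i j\<bar> \<le> M" "\<bar>z' i j\<bar> \<le> M"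
  shows "\<bar>network_rhs m n r a C f v z i j - network_rhs m n r a C f w z' i j\<bar>
           \<le> 2 * ((A + Mf * S) * H + M)
    \<and> \<bar>network_rhs m n r a C f v z i j - network_rhs m n r a C f w z' i j - (z i j - z' i j)\<bar>
        \<le> (A + Mf * S + Lf * S * H) * vnorm m n (v - w)"
proof
  let ?rhs = "network_rhs m n r a C f"
  have coup_ij: "\<bar>coup m n r C f u i j\<bar> \<le> Mf * S" for u
    using abs_coup_le[where C=C and i=i and j=j and r=r and v=u, OF C_ij f_bd(2)]
      mult_left_mono[OF S_ij f_bd(1)] by linarith
  have coup_diff: "\<bar>coup m n r C f v i j - coup m n r C f w i j\<bar> \<le> Lf * S * vnorm m n (v - w)"
  proof -
    have "0 \<le> vnorm m n (v - w)" using abs_le_vnorm[OF ij] abs_ge_zero order_trans by blast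
    then have "Lf * (\<Sum>(h,l)\<in>nbhd m n r i j. C i j h l) * vnorm m n (v - w)
                 \<le> Lf * S * vnorm m n (v - w)"
      using S_ij f_lip(1) by (intro mult_right_mono mult_left_mono)
    then show ?thesis
      using abs_coup_diff_le[where C=C and i=i and j=j and r=r, OF C_ij f_lip]
      by (rule order_trans[rotated])
  qed
  show "\<bar>?rhs v z i j - ?rhs w z' i j\<bar> \<le> 2 * ((A + Mf * S) * H + M)"
    using abs_network_rhs_le[where a=a and C=C and i=i and j=j and v=v and r=r and z=z,
          OF a_ij coup_ij vw_ij(1) z_ij(1)]
      abs_network_rhs_le[where a=a and C=C and i=i and j=j and v=w and r=r and z=z',
          OF a_ij coup_ij vw_ij(2) z_ij(2)]
      abs_triangle_ineq4[of "?rhs v z i j" "?rhs w z' i j"]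
    by argo
  show "\<bar>?rhs v z i j - ?rhs w z' i j - (z i j - z' i j)\<bar>
          \<le> (A + Mf * S + Lf * S * H) * vnorm m n (v - w)"
    by (rule abs_network_rhs_diff_le[where a=a and C=C and i=i and j=j and v=v,
          OF ij a_ij coup_ij coup_diff vw_ij(2)])
qed

lemma network_rhs_bounds:
  assumes C_nonneg: "\<forall>(i,j)\<in>cells m n. \<forall>(h,l)\<in>cells m n. 0 \<le> C i j h l"
    and f_bd: "0 \<le> Mf" "\<forall>s. \<bar>f s\<bar> \<le> Mf"
    and f_lip: "0 \<le> Lf" "\<forall>s1 s2. \<bar>f s1 - f s2\<bar> \<le> Lf * \<bar>s1 - s2\<bar>"
    and "compact \<Lambda>"
  shows "\<exists>L B. 0 < L \<and> 0 \<le> B \<and> (\<forall>v w z z'.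
           vnorm m n v \<le> H \<longrightarrow> vnorm m n w \<le> H \<longrightarrow> z \<in> \<Lambda> \<longrightarrow> z' \<in> \<Lambda> \<longrightarrow>
           (\<forall>(i,j)\<in>cells m n.
              \<bar>network_rhs m n r a C f v z i j - network_rhs m n r a C f w z' i j\<bar> \<le> L
            \<and> \<bar>network_rhs m n r a C f v z i j - network_rhs m n r a C f w z' i j - (z i j - z' i j)\<bar>
                \<le> B * vnorm m n (v - w)))"
proof -
  obtain A where "0 \<le> A" and A: "\<forall>(i,j)\<in>cells m n. \<bar>a i j\<bar> \<le> A"
    using bounded_on_cells by blast
  obtain S where "0 \<le> S" and S: "\<forall>(i,j)\<in>cells m n. \<bar>\<Sum>(h,l)\<in>nbhd m n r i j. C i j h l\<bar> \<le> S"
    using bounded_on_cells[of m n "\<lambda>i j. \<Sum>(h,l)\<in>nbhd m n r i j. C i j h l"] by blast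
  obtain M where "0 \<le> M" and M: "\<forall>z\<in>\<Lambda>. \<forall>(i,j)\<in>cells m n. \<bar>z i j\<bar> \<le> M"
    using compact_bounded_on_cells[OF \<open>compact \<Lambda>\<close>] by blast
  define L where "L = 2 * ((A + Mf * S) * \<bar>H\<bar> + M) + 1"
  define B where "B = A + Mf * S + Lf * S * \<bar>H\<bar>"
  have bounds: "\<bar>network_rhs m n r a C f v z i j - network_rhs m n r a C f w z' i j\<bar> \<le> L
      \<and> \<bar>network_rhs m n r a C f v z i j - network_rhs m n r a C f w z' i j
            - (z i j - z' i j)\<bar> \<le> B * vnorm m n (v - w)"
    if "vnorm m n v \<le> H" "vnorm m n w \<le> H" "z \<in> \<Lambda>" "z' \<in> \<Lambda>" and ij: "(i,j) \<in> cells m n"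
    for v w z z' i j
  proof -
    have vw_ij: "\<bar>v i j\<bar> \<le> \<bar>H\<bar>" "\<bar>w i j\<bar> \<le> \<bar>H\<bar>"
      using that(1,2) abs_le_vnorm[OF ij] by (meson abs_ge_self order_trans)+
    have S_ij: "(\<Sum>(h,l)\<in>nbhd m n r i j. C i j h l) \<le> S" using S ij by fastforce
    have C_ij: "\<forall>(h,l)\<in>cells m n. 0 \<le> C i j h l" and a_ij: "\<bar>a i j\<bar> \<le> A"
      and z_ij: "\<bar>z i j\<bar> \<le> M" "\<bar>z' i j\<bar> \<le> M"
      using C_nonneg A M that(3,4) ij by blast+
    show ?thesis
      using network_rhs_pointwise_bounds[where a=a and C=C and i=i and j=j
          and v=v and w=w and z=z and z'=z',
          OF ij C_ij f_bd f_lip a_ij S_ij vw_ij z_ij]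
      by (auto simp: L_def B_def)
  qed
  have "0 \<le> A + Mf * S" using \<open>0 \<le> A\<close> \<open>0 \<le> S\<close> f_bd(1) by simp
  moreover have "0 \<le> (A + Mf * S) * \<bar>H\<bar>" "0 \<le> Lf * S * \<bar>H\<bar>"
    using \<open>0 \<le> A + Mf * S\<close> \<open>0 \<le> S\<close> f_lip(1) by simp_all
  ultimately have "0 < L" "0 \<le> B" using \<open>0 \<le> M\<close> unfolding L_def B_def by argo+
  with bounds show ?thesis by blast
qed

lemma solution_difference_slope:
  assumes C_nonneg: "\<forall>(i,j)\<in>cells m n. \<forall>(h,l)\<in>cells m n. 0 \<le> C i j h l"
    and f_bd: "0 \<le> Mf" "\<forall>s. \<bar>f s\<bar> \<le> Mf"
    and f_lip: "0 \<le> Lf" "\<forall>s1 s2. \<bar>f s1 - f s2\<bar> \<le> Lf * \<bar>s1 - s2\<bar>"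
    and "compact \<Lambda>" and \<zeta>_\<Lambda>: "\<forall>k. \<zeta> k \<in> \<Lambda> \<and> \<zeta>' k \<in> \<Lambda>"
    and sol: "is_sol_N m n r a C f \<theta> \<zeta> \<phi>" "is_sol_N m n r a C f \<theta> \<zeta>' \<phi>'"
    and \<phi>_bd: "\<forall>t\<in>T0 \<theta>. vnorm m n (\<phi> t) \<le> H" "\<forall>t\<in>T0 \<theta>. vnorm m n (\<phi>' t) \<le> H"
  shows "\<exists>L B D. 0 < L \<and> 0 \<le> B \<and> (\<forall>k. \<forall>(i,j)\<in>cells m n. \<forall>t\<in>{\<theta> (2*k - 1) .. \<theta> (2*k)}.
           ((\<lambda>s. (\<phi> s - \<phi>' s) i j) has_real_derivative D k t i j) (at t within {\<theta> (2*k - 1) .. \<theta> (2*k)})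
           \<and> \<bar>D k t i j\<bar> \<le> L \<and> \<bar>D k t i j - (\<zeta> k - \<zeta>' k) i j\<bar> \<le> B * vnorm m n (\<phi> t - \<phi>' t))"
proof -
  let ?rhs = "network_rhs m n r a C f"
  obtain L B where "0 < L" "0 \<le> B" and rhs_bd: "\<forall>v w z z'.
      vnorm m n v \<le> H \<longrightarrow> vnorm m n w \<le> H \<longrightarrow> z \<in> \<Lambda> \<longrightarrow> z' \<in> \<Lambda> \<longrightarrow>
      (\<forall>(i,j)\<in>cells m n. \<bar>?rhs v z i j - ?rhs w z' i j\<bar> \<le> L
         \<and> \<bar>?rhs v z i j - ?rhs w z' i j - (z i j - z' i j)\<bar> \<le> B * vnorm m n (v - w))"
    using network_rhs_bounds[OF C_nonneg f_bd f_lip \<open>compact \<Lambda>\<close>] by blast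
  have "((\<lambda>s. (\<phi> s - \<phi>' s) i j) has_real_derivative ?rhs (\<phi> t) (\<zeta> k) i j - ?rhs (\<phi>' t) (\<zeta>' k) i j)
          (at t within {\<theta> (2*k - 1) .. \<theta> (2*k)})
      \<and> \<bar>?rhs (\<phi> t) (\<zeta> k) i j - ?rhs (\<phi>' t) (\<zeta>' k) i j\<bar> \<le> L
      \<and> \<bar>?rhs (\<phi> t) (\<zeta> k) i j - ?rhs (\<phi>' t) (\<zeta>' k) i j - (\<zeta> k - \<zeta>' k) i j\<bar>
          \<le> B * vnorm m n (\<phi> t - \<phi>' t)"
    if ij: "(i,j) \<in> cells m n" and t: "t \<in> {\<theta> (2*k - 1) .. \<theta> (2*k)}" for k i j t
  proof (intro conjI)
    show "((\<lambda>s. (\<phi> s - \<phi>' s) i j) has_real_derivative ?rhs (\<phi> t) (\<zeta> k) i j - ?rhs (\<phi>' t) (\<zeta>' k) i j)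
            (at t within {\<theta> (2*k - 1) .. \<theta> (2*k)})"
      using sol[THEN is_sol_N_has_real_derivative, OF ij t] by (simp add: DERIV_diff)
    have "t \<in> T0 \<theta>" using t block_subset_T0 by blast
    then show "\<bar>?rhs (\<phi> t) (\<zeta> k) i j - ?rhs (\<phi>' t) (\<zeta>' k) i j\<bar> \<le> L"
      "\<bar>?rhs (\<phi> t) (\<zeta> k) i j - ?rhs (\<phi>' t) (\<zeta>' k) i j - (\<zeta> k - \<zeta>' k) i j\<bar> \<le> B * vnorm m n (\<phi> t - \<phi>' t)"
      using rhs_bd[rule_format, of "\<phi> t" "\<phi>' t" "\<zeta> k" "\<zeta>' k"] \<phi>_bd \<zeta>_\<Lambda> ij by auto
  qed
  with \<open>0 < L\<close> \<open>0 \<le> B\<close> show ?thesis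
    by (intro exI[of _ L] exI[of _ B]
        exI[of _ "\<lambda>k t i j. ?rhs (\<phi> t) (\<zeta> k) i j - ?rhs (\<phi>' t) (\<zeta>' k) i j"]) auto
qed

section \<open>Separation on a single block\<close>

lemma abs_slope_times_length_le:
  fixes g g' :: "real \<Rightarrow> real"
  assumes "\<alpha> \<le> \<beta>"
    and deriv: "\<forall>t\<in>{\<alpha>..\<beta>}. (g has_real_derivative g' t) (at t within {\<alpha>..\<beta>})"
    and near: "\<forall>t\<in>{\<alpha>..\<beta>}. \<bar>g' t - c\<bar> \<le> K"
    and small: "\<forall>t\<in>{\<alpha>..\<beta>}. \<bar>g t\<bar> \<le> e"
  shows "\<bar>c\<bar> * (\<beta> - \<alpha>) \<le> 2 * e + K * (\<beta> - \<alpha>)"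
proof -
  have "((\<lambda>t. g t - c * t) has_real_derivative g' t - c) (at t within {\<alpha>..\<beta>})"
    if "t \<in> {\<alpha>..\<beta>}" for t
    using deriv that by (auto intro!: derivative_eq_intros)
  then have "norm ((\<lambda>t. g t - c * t) \<beta> - (\<lambda>t. g t - c * t) \<alpha>) \<le> K * norm (\<beta> - \<alpha>)"
    using near assms(1) by (intro field_differentiable_bound[of "{\<alpha>..\<beta>}"]) auto
  moreover have "\<bar>g \<beta>\<bar> \<le> e" "\<bar>g \<alpha>\<bar> \<le> e" using small assms(1) by auto
  ultimately have "\<bar>c * (\<beta> - \<alpha>)\<bar> \<le> 2 * e + K * (\<beta> - \<alpha>)"
    using assms(1) by (simp add: abs_le_iff algebra_simps) linarith
  then show ?thesis using assms(1) by (simp add: abs_mult)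
qed

lemma abs_gt_on_subinterval:
  fixes g g' :: "real \<Rightarrow> real"
  assumes deriv: "\<forall>t\<in>{\<alpha>..\<beta>}. (g has_real_derivative g' t) (at t within {\<alpha>..\<beta>})"
    and bound: "\<forall>t\<in>{\<alpha>..\<beta>}. \<bar>g' t\<bar> \<le> L" and "0 < L"
    and t0: "t0 \<in> {\<alpha>..\<beta>}" and large: "e < \<bar>g t0\<bar>" and "0 < e"
  shows "\<exists>lo hi. \<alpha> \<le> lo \<and> lo \<le> hi \<and> hi \<le> \<beta> \<and> min (e / (2 * L)) (\<beta> - \<alpha>) \<le> hi - lo
           \<and> (\<forall>t\<in>{lo..hi}. e / 2 < \<bar>g t\<bar>)"
proof (intro exI conjI ballI)
  define d where "d = e / (2 * L)"
  have "0 < d" "L * d = e / 2" using \<open>0 < L\<close> \<open>0 < e\<close> by (simp_all add: d_def)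
  show "\<alpha> \<le> max \<alpha> (t0 - d)" "max \<alpha> (t0 - d) \<le> min \<beta> (t0 + d)" "min \<beta> (t0 + d) \<le> \<beta>"
    using t0 \<open>0 < d\<close> by auto
  show "min (e / (2 * L)) (\<beta> - \<alpha>) \<le> min \<beta> (t0 + d) - max \<alpha> (t0 - d)"
    using t0 \<open>0 < d\<close> unfolding d_def[symmetric] by (auto simp: min_def max_def)
  fix t assume "t \<in> {max \<alpha> (t0 - d) .. min \<beta> (t0 + d)}"
  then have t: "t \<in> {\<alpha>..\<beta>}" "\<bar>t - t0\<bar> \<le> d" by auto
  have "\<bar>g t - g t0\<bar> \<le> L * \<bar>t - t0\<bar>"
    using field_differentiable_bound[where S="{\<alpha>..\<beta>}" and f'=g'] deriv bound t(1) t0 by auto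
  also have "\<dots> \<le> e / 2"
    using mult_left_mono[OF t(2), of L] \<open>0 < L\<close> \<open>L * d = e / 2\<close> by simp
  finally show "e / 2 < \<bar>g t\<bar>" using large by linarith
qed

lemma exists_large_point_in_block:
  fixes w D :: "real \<Rightarrow> vec" and \<Delta> :: vec
  assumes "1 \<le> m" "1 \<le> n"
    and slope: "\<forall>(i,j)\<in>cells m n. \<forall>t\<in>{\<alpha>..\<beta>}.
          ((\<lambda>s. w s i j) has_real_derivative D t i j) (at t within {\<alpha>..\<beta>})
          \<and> \<bar>D t i j - \<Delta> i j\<bar> \<le> B * vnorm m n (w t)"
    and "0 \<le> B" and \<eta>0: "0 < \<eta>0" "\<eta>0 \<le> \<beta> - \<alpha>"
    and "0 < e" and e_le: "e * (2 / \<eta>0 + B) \<le> \<epsilon>" and "\<epsilon> < vnorm m n \<Delta>"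
  shows "\<exists>t0\<in>{\<alpha>..\<beta>}. e < vnorm m n (w t0)"
proof (rule ccontr)
  assume "\<not> ?thesis"
  then have small: "\<forall>t\<in>{\<alpha>..\<beta>}. vnorm m n (w t) \<le> e" by auto
  obtain i j where ij: "(i,j) \<in> cells m n" and big: "\<epsilon> < \<bar>\<Delta> i j\<bar>"
    using \<open>\<epsilon> < vnorm m n \<Delta>\<close> less_vnorm_iff[OF assms(1,2)] by auto
  have "\<bar>\<Delta> i j\<bar> * (\<beta> - \<alpha>) \<le> 2 * e + B * e * (\<beta> - \<alpha>)"
  proof (rule abs_slope_times_length_le[where g'="\<lambda>t. D t i j"])
    show "\<forall>t\<in>{\<alpha>..\<beta>}. \<bar>D t i j - \<Delta> i j\<bar> \<le> B * e"
    proof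
      fix t assume t: "t \<in> {\<alpha>..\<beta>}"
      have "B * vnorm m n (w t) \<le> B * e" using small t \<open>0 \<le> B\<close> by (simp add: mult_left_mono)
      then show "\<bar>D t i j - \<Delta> i j\<bar> \<le> B * e" using slope ij t by fastforce
    qed
    show "\<forall>t\<in>{\<alpha>..\<beta>}. \<bar>w t i j\<bar> \<le> e"
      using abs_le_vnorm[OF ij] small order_trans by blast
  qed (use slope ij \<eta>0 in auto)
  also have "\<dots> \<le> e * (2 / \<eta>0 + B) * (\<beta> - \<alpha>)"
  proof -
    have "2 * e * 1 \<le> 2 * e * ((\<beta> - \<alpha>) / \<eta>0)"
      using \<eta>0 \<open>0 < e\<close> by (intro mult_left_mono) simp_all
    then show ?thesis using \<eta>0(1) by (simp add: field_simps)
  qed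
  also have "\<dots> \<le> \<epsilon> * (\<beta> - \<alpha>)"
    using \<eta>0 e_le by (intro mult_right_mono) simp_all
  also have "\<dots> < \<bar>\<Delta> i j\<bar> * (\<beta> - \<alpha>)"
    using big \<eta>0 by (intro mult_strict_right_mono) simp_all
  finally show False by simp
qed

lemma block_separation:
  fixes w D :: "real \<Rightarrow> vec" and \<Delta> :: vec
  assumes "1 \<le> m" "1 \<le> n"
    and slope: "\<forall>(i,j)\<in>cells m n. \<forall>t\<in>{\<alpha>..\<beta>}.
          ((\<lambda>s. w s i j) has_real_derivative D t i j) (at t within {\<alpha>..\<beta>})
          \<and> \<bar>D t i j\<bar> \<le> L \<and> \<bar>D t i j - \<Delta> i j\<bar> \<le> B * vnorm m n (w t)"
    and "0 < L" "0 \<le> B" and \<eta>0: "0 < \<eta>0" "\<eta>0 \<le> \<beta> - \<alpha>"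
    and "0 < e" and e_le: "e * (2 / \<eta>0 + B) \<le> \<epsilon>" and "\<epsilon> < vnorm m n \<Delta>"
  shows "\<exists>lo hi. \<alpha> \<le> lo \<and> lo \<le> hi \<and> hi \<le> \<beta> \<and> min (e / (2 * L)) \<eta>0 \<le> hi - lo
           \<and> (\<forall>t\<in>{lo..hi}. e / 2 < vnorm m n (w t))"
proof -
  have "\<exists>t0\<in>{\<alpha>..\<beta>}. e < vnorm m n (w t0)"
    by (rule exists_large_point_in_block[where D=D,
          OF assms(1,2) _ \<open>0 \<le> B\<close> \<eta>0 \<open>0 < e\<close> e_le \<open>\<epsilon> < vnorm m n \<Delta>\<close>])
      (use slope in blast)
  then obtain t0 i j where t0: "t0 \<in> {\<alpha>..\<beta>}" and ij: "(i,j) \<in> cells m n"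
    and large: "e < \<bar>w t0 i j\<bar>"
    using less_vnorm_iff[OF assms(1,2)] by blast
  obtain lo hi where "\<alpha> \<le> lo" "lo \<le> hi" "hi \<le> \<beta>" "min (e / (2 * L)) (\<beta> - \<alpha>) \<le> hi - lo"
    and sep: "\<forall>t\<in>{lo..hi}. e / 2 < \<bar>w t i j\<bar>"
    using abs_gt_on_subinterval[where g="\<lambda>s. w s i j" and g'="\<lambda>t. D t i j",
        OF _ _ \<open>0 < L\<close> t0 large \<open>0 < e\<close>] slope ij
    by fastforce
  moreover have "min (e / (2 * L)) \<eta>0 \<le> min (e / (2 * L)) (\<beta> - \<alpha>)"
    using \<eta>0(2) by simp
  moreover have "\<forall>t\<in>{lo..hi}. e / 2 < vnorm m n (w t)"
    using sep abs_le_vnorm[OF ij] by (fastforce intro: order_less_le_trans)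
  ultimately show ?thesis by (intro exI[of _ lo] exI[of _ hi]) auto
qed

section \<open>Frequent separation\<close>

lemma infinite_exceeding_set_of_limsup_pos:
  fixes x :: "nat \<Rightarrow> real"
  assumes "0 < limsup (\<lambda>k. ereal (x k))"
  shows "\<exists>\<epsilon>>0. infinite {k. \<epsilon> < x k}"
proof -
  obtain \<epsilon> where "0 < ereal \<epsilon>" "ereal \<epsilon> < limsup (\<lambda>k. ereal (x k))"
    using ereal_dense2[OF assms] by blast
  moreover have "limsup (\<lambda>k. ereal (x k)) \<le> ereal \<epsilon>" if "finite {k. \<epsilon> < x k}"
  proof (rule Limsup_bounded)
    show "\<forall>\<^sub>F k in sequentially. ereal (x k) \<le> ereal \<epsilon>"
      using that by (simp add: cofinite_eq_sequentially[symmetric] eventually_cofinite not_le)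
  qed
  ultimately show ?thesis by (intro exI[of _ \<epsilon>]) auto
qed

lemma separated_intervals_of_infinitely_many_blocks:
  fixes \<theta> :: "int \<Rightarrow> real" and S :: "int set"
  assumes "strict_mono \<theta>" "infinite S"
    and blocks: "\<forall>k\<in>S. \<exists>lo hi. \<theta> (2*k - 1) \<le> lo \<and> lo \<le> hi \<and> hi \<le> \<theta> (2*k) \<and> \<epsilon>1 \<le> hi - lo
                   \<and> (\<forall>t\<in>{lo..hi}. P t)"
  shows "\<exists>J :: nat \<Rightarrow> real set.
           (\<forall>q. is_interval (J q) \<and> bounded (J q) \<and> J q \<noteq> {} \<and> J q \<subseteq> T0 \<theta>
                 \<and> \<epsilon>1 \<le> Sup (J q) - Inf (J q))
         \<and> (\<forall>q q'. q \<noteq> q' \<longrightarrow> J q \<inter> J q' = {})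
         \<and> (\<forall>t\<in>(\<Union>q. J q). P t)"
proof -
  obtain g :: "nat \<Rightarrow> int" where "inj g" "range g \<subseteq> S"
    using infinite_countable_subset[OF assms(2)] by blast
  have "\<exists>p. \<theta> (2 * g q - 1) \<le> fst p \<and> fst p \<le> snd p \<and> snd p \<le> \<theta> (2 * g q)
             \<and> \<epsilon>1 \<le> snd p - fst p \<and> (\<forall>t\<in>{fst p..snd p}. P t)" for q
  proof -
    have "g q \<in> S" using \<open>range g \<subseteq> S\<close> by blast
    then obtain lo hi where "\<theta> (2 * g q - 1) \<le> lo \<and> lo \<le> hi \<and> hi \<le> \<theta> (2 * g q)
        \<and> \<epsilon>1 \<le> hi - lo \<and> (\<forall>t\<in>{lo..hi}. P t)"
      using blocks by blast
    then show ?thesis by (intro exI[of _ "(lo, hi)"]) simp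
  qed
  then obtain I where I: "\<And>q. \<theta> (2 * g q - 1) \<le> fst (I q) \<and> fst (I q) \<le> snd (I q)
      \<and> snd (I q) \<le> \<theta> (2 * g q) \<and> \<epsilon>1 \<le> snd (I q) - fst (I q) \<and> (\<forall>t\<in>{fst (I q)..snd (I q)}. P t)"
    by (metis choice)
  show ?thesis
  proof (intro exI[of _ "\<lambda>q. {fst (I q)..snd (I q)}"] conjI allI impI)
    fix q
    have "{fst (I q)..snd (I q)} \<subseteq> {\<theta> (2 * g q - 1) .. \<theta> (2 * g q)}" using I[of q] by auto
    then show "{fst (I q)..snd (I q)} \<subseteq> T0 \<theta>" using block_subset_T0 by blast
    show "\<epsilon>1 \<le> Sup {fst (I q)..snd (I q)} - Inf {fst (I q)..snd (I q)}" using I[of q] by simp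
    show "{fst (I q)..snd (I q)} \<noteq> {}" using I[of q] by simp
  next
    fix q q' :: nat assume "q \<noteq> q'"
    then have "{\<theta> (2 * g q - 1) .. \<theta> (2 * g q)} \<inter> {\<theta> (2 * g q' - 1) .. \<theta> (2 * g q')} = {}"
      using \<open>inj g\<close> by (intro blocks_disjoint[OF assms(1)]) (simp add: inj_eq)
    then show "{fst (I q)..snd (I q)} \<inter> {fst (I q')..snd (I q')} = {}"
      using I[of q] I[of q'] by auto
  qed (use I in auto)
qed

lemma frequently_separated_of_slopes:
  fixes w :: "real \<Rightarrow> vec" and \<Delta> :: "int \<Rightarrow> vec" and D :: "int \<Rightarrow> real \<Rightarrow> vec"
  assumes "1 \<le> m" "1 \<le> n" and "strict_mono \<theta>"
    and \<eta>0: "0 < \<eta>0" "\<forall>k. \<eta>0 \<le> eta \<theta> k"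
    and slope: "\<forall>k. \<forall>(i,j)\<in>cells m n. \<forall>t\<in>{\<theta> (2*k - 1) .. \<theta> (2*k)}.
           ((\<lambda>s. w s i j) has_real_derivative D k t i j) (at t within {\<theta> (2*k - 1) .. \<theta> (2*k)})
           \<and> \<bar>D k t i j\<bar> \<le> L \<and> \<bar>D k t i j - \<Delta> k i j\<bar> \<le> B * vnorm m n (w t)"
    and "0 < L" "0 \<le> B" "0 < \<epsilon>" and freq: "infinite {k. \<epsilon> < vnorm m n (\<Delta> (int k))}"
  shows "\<exists>\<epsilon>0>0. \<exists>\<epsilon>1>0. \<exists>J :: nat \<Rightarrow> real set.
           (\<forall>q. is_interval (J q) \<and> bounded (J q) \<and> J q \<noteq> {} \<and> J q \<subseteq> T0 \<theta>
                 \<and> \<epsilon>1 \<le> Sup (J q) - Inf (J q))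
         \<and> (\<forall>q q'. q \<noteq> q' \<longrightarrow> J q \<inter> J q' = {})
         \<and> (\<forall>t\<in>(\<Union>q. J q). \<epsilon>0 < vnorm m n (w t))"
proof -
  define e where "e = \<epsilon> / (2 / \<eta>0 + B)"
  have "0 < 2 / \<eta>0 + B" using \<eta>0(1) \<open>0 \<le> B\<close> by (simp add: add_pos_nonneg)
  then have "0 < e" "e * (2 / \<eta>0 + B) \<le> \<epsilon>" using \<open>0 < \<epsilon>\<close> by (simp_all add: e_def)
  have "infinite (int ` {k. \<epsilon> < vnorm m n (\<Delta> (int k))})"
    using freq by (auto dest: finite_imageD simp: inj_on_def)
  moreover have "\<exists>lo hi. \<theta> (2*k - 1) \<le> lo \<and> lo \<le> hi \<and> hi \<le> \<theta> (2*k) \<and> min (e / (2 * L)) \<eta>0 \<le> hi - lo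
          \<and> (\<forall>t\<in>{lo..hi}. e / 2 < vnorm m n (w t))"
    if "\<epsilon> < vnorm m n (\<Delta> k)" for k
  proof (rule block_separation[OF assms(1,2) spec[OF slope, of k]])
    show "\<eta>0 \<le> \<theta> (2*k) - \<theta> (2*k - 1)" using \<eta>0(2) by (simp add: eta_def)
  qed (use \<open>0 < L\<close> \<open>0 \<le> B\<close> \<eta>0(1) \<open>0 < e\<close> \<open>e * (2 / \<eta>0 + B) \<le> \<epsilon>\<close> that in auto)
  ultimately have "\<exists>J :: nat \<Rightarrow> real set.
      (\<forall>q. is_interval (J q) \<and> bounded (J q) \<and> J q \<noteq> {} \<and> J q \<subseteq> T0 \<theta>
            \<and> min (e / (2 * L)) \<eta>0 \<le> Sup (J q) - Inf (J q))
    \<and> (\<forall>q q'. q \<noteq> q' \<longrightarrow> J q \<inter> J q' = {})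
    \<and> (\<forall>t\<in>(\<Union>q. J q). e / 2 < vnorm m n (w t))"
    by (intro separated_intervals_of_infinitely_many_blocks[OF \<open>strict_mono \<theta>\<close>]) auto
  moreover have "0 < e / 2" "0 < min (e / (2 * L)) \<eta>0" using \<open>0 < e\<close> \<open>0 < L\<close> \<eta>0(1) by simp_all
  ultimately show ?thesis by (intro exI[of _ "e / 2"] exI[of _ "min (e / (2 * L)) \<eta>0"] conjI) auto
qed

theorem lemma4:
  fixes m n r p :: nat
    and a K :: "nat \<Rightarrow> nat \<Rightarrow> real"
    and C :: "nat \<Rightarrow> nat \<Rightarrow> nat \<Rightarrow> nat \<Rightarrow> real"
    and f :: "real \<Rightarrow> real"
    and \<theta> :: "int \<Rightarrow> real"
    and \<omega> Mf Lf :: real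
    and \<Lambda> :: "vec set" and F :: "vec \<Rightarrow> vec"
    and \<zeta> \<zeta>' :: "int \<Rightarrow> vec"
    and \<phi> \<phi>' :: "real \<Rightarrow> vec"
  assumes mn: "1 \<le> m" "1 \<le> n"
    and a_pos: "\<forall>(i,j)\<in>cells m n. 0 < a i j"
    and C_nonneg: "\<forall>(i,j)\<in>cells m n. \<forall>(h,l)\<in>cells m n. 0 \<le> C i j h l"
    and f_cont: "continuous_on UNIV f"
    and \<theta>_mono: "strict_mono \<theta>"
    and \<theta>_0: "\<theta> (-1) < 0" "0 < \<theta> 0"
    and \<omega>_pos: "0 < \<omega>" and p_pos: "1 \<le> p"
    and \<theta>_per: "\<forall>k. \<theta> (k + 2 * int p) = \<theta> k + \<omega>"
    and \<Lambda>_cpt: "compact \<Lambda>"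
    and \<Lambda>_cells: "\<Lambda> \<subseteq> {v. \<forall>i j. (i,j) \<notin> cells m n \<longrightarrow> v i j = 0}"
    and F_cont: "continuous_on \<Lambda> F" and F_maps: "F ` \<Lambda> \<subseteq> \<Lambda>"
    and C1: "\<forall>(i,j)\<in>cells m n. \<forall>k. dlt \<theta> k * a i j \<noteq> 1"
    and C2: "\<forall>(i,j)\<in>cells m n. 0 < lam \<theta> p (a i j)"
    and C3: "0 < Mf" "\<forall>s. \<bar>f s\<bar> \<le> Mf"
    and C4: "0 < Lf" "\<forall>s1 s2. \<bar>f s1 - f s2\<bar> \<le> Lf * \<bar>s1 - s2\<bar>"
    and K: "\<forall>(i,j)\<in>cells m n. 0 < K i j \<and>
              (\<forall>s \<tau>. \<tau> \<le> s \<longrightarrow>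
                 \<bar>u \<theta> (a i j) s \<tau>\<bar> \<le> K i j * exp (- lam \<theta> p (a i j) * (s - \<tau>)))"
    and C5: "(Mf + H0 m n r \<theta> p a C K Mf \<Lambda> F * Lf) * cbar m n r \<theta> p a C K < 1"
    and \<zeta>_in: "\<zeta> \<in> Theta \<Lambda> F" and \<zeta>'_in: "\<zeta>' \<in> Theta \<Lambda> F"
    and limsup_pos: "limsup (\<lambda>k::nat. ereal (vnorm m n (\<zeta> (int k) - \<zeta>' (int k)))) > 0"
    and \<phi>_sol: "is_sol_N m n r a C f \<theta> \<zeta> \<phi>"
    and \<phi>_bd: "\<forall>t\<in>T0 \<theta>. vnorm m n (\<phi> t) \<le> H0 m n r \<theta> p a C K Mf \<Lambda> F"
    and \<phi>'_sol: "is_sol_N m n r a C f \<theta> \<zeta>' \<phi>'"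
    and \<phi>'_bd: "\<forall>t\<in>T0 \<theta>. vnorm m n (\<phi>' t) \<le> H0 m n r \<theta> p a C K Mf \<Lambda> F"
  shows "\<exists>\<epsilon>0>0. \<exists>\<epsilon>1>0. \<exists>J :: nat \<Rightarrow> real set.
           (\<forall>q. is_interval (J q) \<and> bounded (J q) \<and> J q \<noteq> {} \<and> J q \<subseteq> T0 \<theta>
                 \<and> \<epsilon>1 \<le> Sup (J q) - Inf (J q))
         \<and> (\<forall>q q'. q \<noteq> q' \<longrightarrow> J q \<inter> J q' = {})
         \<and> (\<forall>t\<in>(\<Union>q. J q). \<epsilon>0 < vnorm m n (\<phi> t - \<phi>' t))"
proof -
  have \<zeta>_\<Lambda>: "\<forall>k. \<zeta> k \<in> \<Lambda> \<and> \<zeta>' k \<in> \<Lambda>" using \<zeta>_in \<zeta>'_in by (simp add: Theta_def)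
  obtain L B D where "0 < L" "0 \<le> B" and slope: "\<forall>k. \<forall>(i,j)\<in>cells m n. \<forall>t\<in>{\<theta> (2*k - 1) .. \<theta> (2*k)}.
      ((\<lambda>s. (\<phi> s - \<phi>' s) i j) has_real_derivative D k t i j) (at t within {\<theta> (2*k - 1) .. \<theta> (2*k)})
      \<and> \<bar>D k t i j\<bar> \<le> L \<and> \<bar>D k t i j - (\<zeta> k - \<zeta>' k) i j\<bar> \<le> B * vnorm m n (\<phi> t - \<phi>' t)"
    using solution_difference_slope[OF C_nonneg less_imp_le[OF C3(1)] C3(2)
        less_imp_le[OF C4(1)] C4(2) \<Lambda>_cpt \<zeta>_\<Lambda> \<phi>_sol \<phi>'_sol \<phi>_bd \<phi>'_bd]
    by blast
  obtain \<epsilon> where "0 < \<epsilon>" and "infinite {k. \<epsilon> < vnorm m n (\<zeta> (int k) - \<zeta>' (int k))}"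
    using infinite_exceeding_set_of_limsup_pos[OF limsup_pos] by blast
  moreover obtain \<eta>0 where "0 < \<eta>0" "\<forall>k. \<eta>0 \<le> eta \<theta> k"
    using eta_uniform_lower_bound[OF \<theta>_mono \<theta>_per p_pos] by blast
  ultimately show ?thesis
    using frequently_separated_of_slopes[where w="\<lambda>t. \<phi> t - \<phi>' t" and \<Delta>="\<lambda>k. \<zeta> k - \<zeta>' k",
        OF mn \<theta>_mono _ _ slope \<open>0 < L\<close> \<open>0 \<le> B\<close>]
    by simp
qed

end
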